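(* Let $G$ be a finite $p$-group for some prime $p$, and let $X(G)$ be the subgroup generated by all normal subgroups $N$ of $G$ satisfying $\eta(G/N) = \eta(G)$. If some maximal cyclic subgroup of $G$ is normal in $G$, then $X(G)$ is cyclic.
   Context: A cyclic subgroup $C$ of a group $G$ is maximal cyclic if there is no cyclic subgroup $D$ of $G$ with $C < D$. $\eta(G)$ denotes the number of conjugacy classes of maximal cyclic subgroups of $G$ (for the trivial group, $\eta = 1$). *)

theory Defs
  imports "HOL-Algebra.Algebra"
begin

definition cyclic_subgroup :: "('a, 'b) monoid_scheme \<Rightarrow> 'a set \<Rightarrow> bool" where
  "cyclic_subgroup G H \<longleftrightarrow> subgroup H G \<and> cyclic_group (G\<lparr>carrier := H\<rparr>)"

definition max_cyclic_subgroup :: "('a, 'b) monoid_scheme \<Rightarrow> 'a set \<Rightarrow> bool" where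
  "max_cyclic_subgroup G C \<longleftrightarrow>
     cyclic_subgroup G C \<and> \<not> (\<exists>D. cyclic_subgroup G D \<and> C \<subset> D)"

definition subgroup_conj_rel :: "('a, 'b) monoid_scheme \<Rightarrow> ('a set \<times> 'a set) set" where
  "subgroup_conj_rel G =
     {(C, D). max_cyclic_subgroup G C \<and> max_cyclic_subgroup G D \<and>
              (\<exists>g \<in> carrier G. D = (g <#\<^bsub>G\<^esub> C) #>\<^bsub>G\<^esub> inv\<^bsub>G\<^esub> g)}"

definition eta :: "('a, 'b) monoid_scheme \<Rightarrow> nat" where
  "eta G = card ({C. max_cyclic_subgroup G C} // subgroup_conj_rel G)"

definition X_subgroup :: "('a, 'b) monoid_scheme \<Rightarrow> 'a set" where
  "X_subgroup G = generate G (\<Union> {N. N \<lhd> G \<and> eta (G Mod N) = eta G})"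

end

theory Submission
  imports Defs
begin

text \<open>
  Let C = <c> be a normal maximal cyclic subgroup and N a normal subgroup with some
  n \<in> N - C; let D be a maximal cyclic subgroup containing c n. Every maximal cyclic
  subgroup of G/N is the image of one of G, and conjugate subgroups have conjugate images,
  so the conjugacy classes of G/N are covered by those of G. Being normal, C is conjugate
  only to itself, hence not to D; but c and c n have the same coset, so the image of C lies
  in that of D and equals it when it is maximal cyclic. Thus two classes of G merge (or the
  class of C is lost) and eta(G/N) < eta(G). Hence every N with eta(G/N) = eta(G) lies in C,
  and X(G) is a subgroup of the cyclic group C.
\<close>

lemma Image_image_equiv_class:
  assumes "equiv A r" and "equiv B s"
    and compat: "\<And>x y. (x, y) \<in> r \<Longrightarrow> f x \<in> B \<Longrightarrow> (f x, f y) \<in> s"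
    and "z \<in> A" and "f z \<in> B"
  shows "s `` (f ` (r `` {z})) = s `` {f z}"
proof
  show "s `` {f z} \<subseteq> s `` (f ` (r `` {z}))"
    using equiv_class_self[OF assms(1,4)] by blast
  have "trans s"
    using assms(2) by (simp add: equiv_def)
  show "s `` (f ` (r `` {z})) \<subseteq> s `` {f z}"
  proof
    fix t assume "t \<in> s `` (f ` (r `` {z}))"
    then obtain w where "(z, w) \<in> r" and "(f w, t) \<in> s"
      by blast
    then have "(f z, t) \<in> s"
      using compat assms(5) transD[OF \<open>trans s\<close>] by blast
    then show "t \<in> s `` {f z}"
      by blast
  qed
qed

text \<open>
  The map W \<mapsto> s `` (f ` W) sends A // r onto a superset of B // s, and the class of x is
  redundant: its value is either empty or equal to that of the class of y.
\<close>

lemma card_quotient_less: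
  assumes r: "equiv A r" and s: "equiv B s" and fin: "finite (A // r)"
    and compat: "\<And>x y. (x, y) \<in> r \<Longrightarrow> f x \<in> B \<Longrightarrow> (f x, f y) \<in> s"
    and onto: "B \<subseteq> f ` A"
    and x: "x \<in> A" and y: "y \<in> A" and "(x, y) \<notin> r"
    and collapse: "f x \<in> B \<Longrightarrow> (f x, f y) \<in> s"
  shows "card (B // s) < card (A // r)"
proof -
  define F where "F W = s `` (f ` W)" for W
  have F_class: "F (r `` {z}) = s `` {f z}" if "z \<in> A" "f z \<in> B" for z
    unfolding F_def using Image_image_equiv_class[where f = f, OF r s compat that] .
  have s_trans: "trans s" and r_sym: "sym r"
    using r s by (simp_all add: equiv_def)
  have rx_ry: "r `` {y} \<noteq> r `` {x}"
    using eq_equiv_class_iff[OF r y x] \<open>(x, y) \<notin> r\<close> symD[OF r_sym] by blast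
  have "B // s \<subseteq> F ` (A // r - {r `` {x}})"
  proof
    fix K assume "K \<in> B // s"
    then obtain t where t: "t \<in> B" "K = s `` {t}" by (rule quotientE)
    then obtain z where z: "z \<in> A" "t = f z" using onto by blast
    show "K \<in> F ` (A // r - {r `` {x}})"
    proof (cases "(z, x) \<in> r")
      case False
      then have "r `` {z} \<noteq> r `` {x}"
        using eq_equiv_class_iff[OF r z(1) x] by blast
      then show ?thesis
        using F_class[OF z(1)] t z quotientI[OF z(1)] by blast
    next
      case True
      then have zx: "(f z, f x) \<in> s"
        using compat t z by blast
      then have "(f x, f y) \<in> s"
        using equiv_type[OF s] collapse by blast
      with zx have "(f z, f y) \<in> s"
        using transD[OF s_trans] by blast
      then have fy: "f y \<in> B" and "K = s `` {f y}"
        using t z equiv_type[OF s] equiv_class_eq[OF s] by blast+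
      then show ?thesis
        using F_class[OF y fy] rx_ry quotientI[OF y] by blast
    qed
  qed
  then have "card (B // s) \<le> card (F ` (A // r - {r `` {x}}))"
    using fin by (intro card_mono) auto
  also have "\<dots> \<le> card (A // r - {r `` {x}})"
    using fin by (intro card_image_le) auto
  also have "\<dots> < card (A // r)"
    using fin quotientI[OF x] by (rule card_Diff1_less)
  finally show ?thesis .
qed

lemma (in group) cyclic_subgroup_iff_generate:
  "cyclic_subgroup G H \<longleftrightarrow> (\<exists>x\<in>carrier G. H = generate G {x})"
proof -
  have "cyclic_group (G\<lparr>carrier := H\<rparr>) \<longleftrightarrow> (\<exists>x\<in>H. H = generate G {x})" if H: "subgroup H G"
  proof -
    interpret S: group "G\<lparr>carrier := H\<rparr>" using H by (rule subgroup_imp_group)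
    have "generate G {x} = range (\<lambda>k::int. x [^]\<^bsub>G\<lparr>carrier := H\<rparr>\<^esub> k)" if "x \<in> H" for x
      using S.generate_pow[of x] generate_consistent[of "{x}" H] that H
      by (simp add: full_SetCompr_eq)
    moreover have "carrier (G\<lparr>carrier := H\<rparr>) = H" by simp
    ultimately show ?thesis
      unfolding S.cyclic_group by (metis (no_types, lifting))
  qed
  moreover have "(\<exists>x\<in>carrier G. H = generate G {x}) \<longleftrightarrow> subgroup H G \<and> (\<exists>x\<in>H. H = generate G {x})"
    using generate_is_subgroup generate.incl[of _ "{_}" G] subgroup.mem_carrier
    by (metis empty_subsetI insert_subset singletonI)
  ultimately show ?thesis
    unfolding cyclic_subgroup_def by blast
qed

lemma (in group) cyclic_subgroup_generate:
  "x \<in> carrier G \<Longrightarrow> cyclic_subgroup G (generate G {x})"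
  using cyclic_subgroup_iff_generate by blast

lemma (in group) cyclic_subgroup_subset:
  "cyclic_subgroup G H \<Longrightarrow> H \<subseteq> carrier G"
  unfolding cyclic_subgroup_def using subgroup.subset by blast

lemma (in group) subgroup_eq_generate_least_pow:
  assumes c: "c \<in> carrier G" and H: "subgroup H G" and H_sub: "H \<subseteq> generate G {c}"
    and m: "0 < m" "c [^] int m \<in> H"
    and below_m: "\<And>n. 0 < n \<Longrightarrow> n < m \<Longrightarrow> c [^] int n \<notin> H"
  shows "H = generate G {c [^] int m}"
proof
  show "generate G {c [^] int m} \<subseteq> H"
    using generate_subgroup_incl[of "{c [^] int m}" H] m H by blast
  show "H \<subseteq> generate G {c [^] int m}"
  proof
    fix x assume x: "x \<in> H"
    then obtain k :: int where k: "x = c [^] k"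
      using H_sub generate_pow[OF c] by auto
    define q r where "q = k div int m" and "r = k mod int m"
    have r: "0 \<le> r" "r < int m"
      unfolding r_def using m(1) by auto
    have split: "x = (c [^] int m) [^] q \<otimes> c [^] r"
      using k int_pow_mult[OF c, of "int m * q" r] int_pow_pow[OF c, of "int m" q]
      unfolding q_def r_def by simp
    have q_in: "(c [^] int m) [^] q \<in> H"
      using m H subgroup_int_pow_closed by blast
    have "c [^] r = inv ((c [^] int m) [^] q) \<otimes> x"
      using split c x H by (simp add: inv_solve_left subgroup.mem_carrier)
    then have "c [^] r \<in> H"
      using q_in x H by (simp add: subgroup.m_closed subgroup.m_inv_closed)
    then have "r = 0"
      using below_m[of "nat r"] r by fastforce
    then have "x = (c [^] int m) [^] q"
      using split c by simp
    then show "x \<in> generate G {c [^] int m}"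
      using generate_pow c by auto
  qed
qed

lemma (in group) subgroup_of_cyclic_subgroup:
  assumes "cyclic_subgroup G C" and H: "subgroup H G" and "H \<subseteq> C"
  shows "cyclic_subgroup G H"
proof -
  obtain c where c: "c \<in> carrier G" and "C = generate G {c}"
    using assms(1) cyclic_subgroup_iff_generate by blast
  then have H_sub: "H \<subseteq> generate G {c}"
    using assms(3) by simp
  show ?thesis
  proof (cases "\<exists>n::nat. 0 < n \<and> c [^] int n \<in> H")
    case True
    define m where "m = (LEAST n::nat. 0 < n \<and> c [^] int n \<in> H)"
    have "0 < m" "c [^] int m \<in> H"
      using LeastI_ex[OF True] unfolding m_def by auto
    moreover have "c [^] int n \<notin> H" if "0 < n" "n < m" for n
      using not_less_Least that unfolding m_def by blast
    ultimately have "H = generate G {c [^] int m}"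
      using subgroup_eq_generate_least_pow[OF c H H_sub] by blast
    then show ?thesis
      using c cyclic_subgroup_generate by simp
  next
    case False
    have "x = \<one>" if x: "x \<in> H" for x
    proof -
      obtain k :: int where k: "x = c [^] k"
        using x H_sub generate_pow[OF c] by auto
      have "c [^] k \<in> H" and "c [^] (- k) \<in> H"
        using x k H c by (simp_all add: int_pow_neg subgroup.m_inv_closed)
      moreover have "int (nat \<bar>k\<bar>) = k \<or> int (nat \<bar>k\<bar>) = - k"
        by linarith
      ultimately have "c [^] int (nat \<bar>k\<bar>) \<in> H"
        by (elim disjE) (simp_all only:)
      moreover have "\<not> (0 < nat \<bar>k\<bar> \<and> c [^] int (nat \<bar>k\<bar>) \<in> H)"
        using spec[OF False[unfolded not_ex], of "nat \<bar>k\<bar>"] .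
      ultimately have "k = 0"
        by simp
      then show ?thesis
        using k by simp
    qed
    then have "H = {\<one>}"
      using H subgroup.one_closed by blast
    then show ?thesis
      using cyclic_subgroup_generate[of \<one>] by (simp add: generate_one)
  qed
qed

lemma (in group_hom) cyclic_subgroup_image:
  assumes "cyclic_subgroup G D"
  shows "cyclic_subgroup H (h ` D)"
proof -
  obtain x where x: "x \<in> carrier G" and "D = generate G {x}"
    using assms G.cyclic_subgroup_iff_generate by blast
  then have "h ` D = generate H {h x}"
    using generate_img[of "{x}"] by simp
  then show ?thesis
    using x H.cyclic_subgroup_generate by simp
qed

lemma (in group) max_cyclic_subgroup_subset:
  "max_cyclic_subgroup G C \<Longrightarrow> C \<subseteq> carrier G"
  unfolding max_cyclic_subgroup_def using cyclic_subgroup_subset by blast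

lemma (in group) ex_max_cyclic_subgroup_containing:
  assumes "finite (carrier G)" and "cyclic_subgroup G H"
  shows "\<exists>D. max_cyclic_subgroup G D \<and> H \<subseteq> D"
proof -
  let ?A = "{D. cyclic_subgroup G D \<and> H \<subseteq> D}"
  have "?A \<subseteq> Pow (carrier G)"
    using cyclic_subgroup_subset by blast
  then have "finite ?A"
    using assms(1) by (simp add: finite_subset)
  moreover have "H \<in> ?A"
    using assms(2) by blast
  ultimately obtain D where D: "D \<in> ?A" and max: "\<And>D'. D' \<in> ?A \<Longrightarrow> D \<subseteq> D' \<Longrightarrow> D = D'"
    using finite_has_maximal[of ?A] by (metis empty_iff)
  have "\<not> D \<subset> D'" if "cyclic_subgroup G D'" for D'
    using D max[of D'] that by auto
  then show ?thesis
    using D unfolding max_cyclic_subgroup_def by blast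
qed

lemma (in group) conj_coset_eq_image:
  "g \<in> carrier G \<Longrightarrow> C \<subseteq> carrier G \<Longrightarrow> (g <# C) #> inv g = (\<lambda>c. g \<otimes> c \<otimes> inv g) ` C"
  unfolding l_coset_def r_coset_def by auto

lemma (in group) inv_mult_cancel:
  assumes "x \<in> carrier G" "z \<in> carrier G"
  shows "inv x \<otimes> (x \<otimes> z) = z" and "x \<otimes> (inv x \<otimes> z) = z"
  using assms by (simp_all add: m_assoc[symmetric])

lemma (in group) conj_image_one:
  assumes "C \<subseteq> carrier G"
  shows "(\<lambda>c. \<one> \<otimes> c \<otimes> inv \<one>) ` C = C"
proof -
  have "(\<lambda>c. \<one> \<otimes> c \<otimes> inv \<one>) ` C = (\<lambda>c. c) ` C"
    using assms by (intro image_cong) (auto simp: subsetD)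
  then show ?thesis
    by simp
qed

lemma (in group) conj_image_conj_image:
  assumes "x \<in> carrier G" "y \<in> carrier G" "C \<subseteq> carrier G"
  shows "(\<lambda>c. x \<otimes> c \<otimes> inv x) ` (\<lambda>c. y \<otimes> c \<otimes> inv y) ` C
      = (\<lambda>c. (x \<otimes> y) \<otimes> c \<otimes> inv (x \<otimes> y)) ` C"
  unfolding image_image
  using assms by (intro image_cong) (auto simp: inv_mult_group m_assoc subsetD)

lemma (in group) conj_image_inv_cancel:
  assumes "g \<in> carrier G" "C \<subseteq> carrier G"
  shows "(\<lambda>c. inv g \<otimes> c \<otimes> g) ` (\<lambda>c. g \<otimes> c \<otimes> inv g) ` C = C"
    and "(\<lambda>c. g \<otimes> c \<otimes> inv g) ` (\<lambda>c. inv g \<otimes> c \<otimes> g) ` C = C"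
proof -
  have "(\<lambda>c. inv g \<otimes> (g \<otimes> c \<otimes> inv g) \<otimes> g) ` C = (\<lambda>c. c) ` C"
    and "(\<lambda>c. g \<otimes> (inv g \<otimes> c \<otimes> g) \<otimes> inv g) ` C = (\<lambda>c. c) ` C"
    using assms by (auto simp: m_assoc inv_mult_cancel subsetD intro!: image_cong)
  then show "(\<lambda>c. inv g \<otimes> c \<otimes> g) ` (\<lambda>c. g \<otimes> c \<otimes> inv g) ` C = C"
    and "(\<lambda>c. g \<otimes> c \<otimes> inv g) ` (\<lambda>c. inv g \<otimes> c \<otimes> g) ` C = C"
    by (simp_all add: image_image)
qed

lemma (in group) conj_group_hom:
  "g \<in> carrier G \<Longrightarrow> group_hom G G (\<lambda>c. g \<otimes> c \<otimes> inv g)"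
  by unfold_locales (auto simp: hom_def m_assoc inv_mult_cancel)

lemma (in group_hom) image_conj_image:
  assumes "g \<in> carrier G" "C \<subseteq> carrier G"
  shows "h ` (\<lambda>c. g \<otimes> c \<otimes> inv g) ` C
      = (\<lambda>d. h g \<otimes>\<^bsub>H\<^esub> d \<otimes>\<^bsub>H\<^esub> inv\<^bsub>H\<^esub> (h g)) ` h ` C"
  unfolding image_image
  using assms by (intro image_cong) (auto simp: subsetD)

lemma (in group) max_cyclic_subgroup_conj:
  assumes C: "max_cyclic_subgroup G C" and g: "g \<in> carrier G"
  shows "max_cyclic_subgroup G ((\<lambda>c. g \<otimes> c \<otimes> inv g) ` C)"
proof -
  let ?f = "\<lambda>c. g \<otimes> c \<otimes> inv g" and ?f' = "\<lambda>c. inv g \<otimes> c \<otimes> g"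
  interpret f: group_hom G G ?f using conj_group_hom[OF g] .
  interpret f': group_hom G G ?f' using conj_group_hom[of "inv g"] g by simp
  have C_sub: "C \<subseteq> carrier G"
    using C max_cyclic_subgroup_subset by blast
  have "cyclic_subgroup G (?f ` C)"
    using C f.cyclic_subgroup_image unfolding max_cyclic_subgroup_def by blast
  moreover have "\<not> ?f ` C \<subset> D" if D: "cyclic_subgroup G D" for D
  proof
    assume less: "?f ` C \<subset> D"
    have D_sub: "D \<subseteq> carrier G"
      using D cyclic_subgroup_subset by blast
    have "C = ?f' ` ?f ` C"
      using conj_image_inv_cancel(1)[OF g C_sub] by (rule sym)
    also have "\<dots> \<subseteq> ?f' ` D"
      using less by (intro image_mono) blast
    finally have "C \<subseteq> ?f' ` D" .
    moreover have "C \<noteq> ?f' ` D"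
    proof
      assume "C = ?f' ` D"
      then have "?f ` C = D"
        using conj_image_inv_cancel(2)[OF g D_sub] by (simp only:)
      then show False
        using less by blast
    qed
    moreover have "cyclic_subgroup G (?f' ` D)"
      using D f'.cyclic_subgroup_image by blast
    ultimately show False
      using C unfolding max_cyclic_subgroup_def by blast
  qed
  ultimately show ?thesis
    unfolding max_cyclic_subgroup_def by blast
qed

lemma (in group) subgroup_conj_rel_iff:
  "(C, D) \<in> subgroup_conj_rel G \<longleftrightarrow>
     max_cyclic_subgroup G C \<and> (\<exists>g\<in>carrier G. D = (\<lambda>c. g \<otimes> c \<otimes> inv g) ` C)"
proof -
  have "(g <# C) #> inv g = (\<lambda>c. g \<otimes> c \<otimes> inv g) ` C"
    if "max_cyclic_subgroup G C" "g \<in> carrier G" for g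
    using conj_coset_eq_image that max_cyclic_subgroup_subset by blast
  then show ?thesis
    unfolding subgroup_conj_rel_def using max_cyclic_subgroup_conj by auto
qed

lemma (in group) equiv_subgroup_conj_rel:
  "equiv {C. max_cyclic_subgroup G C} (subgroup_conj_rel G)"
proof (rule equivI)
  show "subgroup_conj_rel G \<subseteq> {C. max_cyclic_subgroup G C} \<times> {C. max_cyclic_subgroup G C}"
    unfolding subgroup_conj_rel_def by auto
  then show "refl_on {C. max_cyclic_subgroup G C} (subgroup_conj_rel G)"
  proof (intro refl_onI)
    fix C assume "C \<in> {C. max_cyclic_subgroup G C}"
    then have C: "max_cyclic_subgroup G C" by simp
    then have "C = (\<lambda>c. \<one> \<otimes> c \<otimes> inv \<one>) ` C"
      using conj_image_one max_cyclic_subgroup_subset by simp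
    then show "(C, C) \<in> subgroup_conj_rel G"
      using C subgroup_conj_rel_iff one_closed by blast
  qed
  show "sym (subgroup_conj_rel G)"
  proof (rule symI)
    fix C D assume "(C, D) \<in> subgroup_conj_rel G"
    then obtain g where C: "max_cyclic_subgroup G C" and g: "g \<in> carrier G"
      and D: "D = (\<lambda>c. g \<otimes> c \<otimes> inv g) ` C"
      using subgroup_conj_rel_iff by blast
    have "max_cyclic_subgroup G D"
      using max_cyclic_subgroup_conj[OF C g] D by simp
    moreover have "C = (\<lambda>c. inv g \<otimes> c \<otimes> inv (inv g)) ` D"
      using conj_image_inv_cancel(1)[OF g max_cyclic_subgroup_subset[OF C]] D g by simp
    ultimately show "(D, C) \<in> subgroup_conj_rel G"
      using subgroup_conj_rel_iff g inv_closed by blast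
  qed
  show "trans (subgroup_conj_rel G)"
  proof (rule transI)
    fix C D E assume "(C, D) \<in> subgroup_conj_rel G" "(D, E) \<in> subgroup_conj_rel G"
    then obtain x y where C: "max_cyclic_subgroup G C" and "x \<in> carrier G" "y \<in> carrier G"
      and "D = (\<lambda>c. y \<otimes> c \<otimes> inv y) ` C" "E = (\<lambda>c. x \<otimes> c \<otimes> inv x) ` D"
      using subgroup_conj_rel_iff by meson
    then have "E = (\<lambda>c. (x \<otimes> y) \<otimes> c \<otimes> inv (x \<otimes> y)) ` C"
      using conj_image_conj_image max_cyclic_subgroup_subset[OF C] by simp
    then show "(C, E) \<in> subgroup_conj_rel G"
      using subgroup_conj_rel_iff C \<open>x \<in> carrier G\<close> \<open>y \<in> carrier G\<close> m_closed by blast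
  qed
qed

lemma (in group) subgroup_conj_rel_normal:
  assumes C: "C \<lhd> G" and "(C, D) \<in> subgroup_conj_rel G"
  shows "D = C"
proof -
  obtain g where g: "g \<in> carrier G" and D: "D = (g <# C) #> inv g"
    using assms(2) unfolding subgroup_conj_rel_def by blast
  have C_sub: "C \<subseteq> carrier G"
    using C normal_imp_subgroup subgroup.subset by blast
  have "g <# C = C #> g"
    using C g normal.coset_eq by blast
  then have "D = C #> (g \<otimes> inv g)"
    using D g C_sub by (simp add: coset_mult_assoc)
  then show ?thesis
    using g C_sub by simp
qed

lemma (in group_hom) subgroup_conj_rel_image:
  assumes "(D, D') \<in> subgroup_conj_rel G" and hD: "max_cyclic_subgroup H (h ` D)"
  shows "(h ` D, h ` D') \<in> subgroup_conj_rel H"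
proof -
  obtain g where D: "max_cyclic_subgroup G D" and g: "g \<in> carrier G"
    and D': "D' = (\<lambda>c. g \<otimes> c \<otimes> inv g) ` D"
    using assms(1) G.subgroup_conj_rel_iff by blast
  have "h ` D' = (\<lambda>d. h g \<otimes>\<^bsub>H\<^esub> d \<otimes>\<^bsub>H\<^esub> inv\<^bsub>H\<^esub> (h g)) ` h ` D"
    unfolding D' using image_conj_image[OF g G.max_cyclic_subgroup_subset[OF D]] .
  moreover have "h g \<in> carrier H"
    using g by simp
  ultimately show ?thesis
    using hD H.subgroup_conj_rel_iff by blast
qed

lemma (in group_hom) max_cyclic_subgroup_lift:
  assumes fin: "finite (carrier G)" and onto: "h ` carrier G = carrier H"
    and Q: "max_cyclic_subgroup H Q"
  shows "\<exists>D. max_cyclic_subgroup G D \<and> h ` D = Q"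
proof -
  obtain y where "y \<in> carrier H" and Q_eq: "Q = generate H {y}"
    using Q H.cyclic_subgroup_iff_generate unfolding max_cyclic_subgroup_def by blast
  then obtain x where x: "x \<in> carrier G" and y: "y = h x"
    using onto by blast
  obtain D where D: "max_cyclic_subgroup G D" and "generate G {x} \<subseteq> D"
    using G.ex_max_cyclic_subgroup_containing[OF fin G.cyclic_subgroup_generate[OF x]] by blast
  then have "h x \<in> h ` D"
    using generate.incl[of x "{x}" G] by blast
  moreover have hD: "cyclic_subgroup H (h ` D)"
    using D cyclic_subgroup_image unfolding max_cyclic_subgroup_def by blast
  ultimately have "Q \<subseteq> h ` D"
    unfolding Q_eq y cyclic_subgroup_def by (simp add: H.generate_subgroup_incl)
  then have "Q = h ` D"
    using Q hD unfolding max_cyclic_subgroup_def by blast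
  then show ?thesis
    using D by blast
qed

lemma (in group_hom) eta_less_of_image_subset:
  assumes fin: "finite (carrier G)" and onto: "h ` carrier G = carrier H"
    and C: "max_cyclic_subgroup G C" and D: "max_cyclic_subgroup G D"
    and not_conj: "(C, D) \<notin> subgroup_conj_rel G" and hC_hD: "h ` C \<subseteq> h ` D"
  shows "eta H < eta G"
proof -
  have collapse: "(h ` C, h ` D) \<in> subgroup_conj_rel H"
    if hC: "h ` C \<in> {Q. max_cyclic_subgroup H Q}"
  proof -
    have "cyclic_subgroup H (h ` D)"
      using D cyclic_subgroup_image unfolding max_cyclic_subgroup_def by blast
    then have "h ` C = h ` D"
      using hC hC_hD unfolding max_cyclic_subgroup_def by blast
    then show ?thesis
      using hC H.equiv_subgroup_conj_rel unfolding equiv_def refl_on_def by auto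
  qed
  have onto_max: "{Q. max_cyclic_subgroup H Q} \<subseteq> image h ` {D. max_cyclic_subgroup G D}"
    using max_cyclic_subgroup_lift[OF fin onto] by blast
  have "{D. max_cyclic_subgroup G D} \<subseteq> Pow (carrier G)"
    using G.max_cyclic_subgroup_subset by blast
  then have "finite ({D. max_cyclic_subgroup G D} // subgroup_conj_rel G)"
    using fin by (simp add: finite_quotient finite_subset G.equiv_subgroup_conj_rel equiv_type)
  then show ?thesis
    unfolding eta_def
    using card_quotient_less[OF G.equiv_subgroup_conj_rel H.equiv_subgroup_conj_rel _
        _ onto_max _ _ not_conj collapse] subgroup_conj_rel_image C D by simp
qed

lemma (in group) eta_Mod_less:
  assumes fin: "finite (carrier G)" and N: "N \<lhd> G"
    and C: "max_cyclic_subgroup G C" and C_normal: "C \<lhd> G" and "\<not> N \<subseteq> C"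
  shows "eta (G Mod N) < eta G"
proof -
  interpret N: normal N G using N .
  interpret GN: group "G Mod N" using N.factorgroup_is_group .
  interpret h: group_hom G "G Mod N" "\<lambda>a. N #> a"
    using N.r_coset_hom_Mod by unfold_locales
  obtain n where n: "n \<in> N" "n \<notin> C" and n_carrier: "n \<in> carrier G"
    using assms(5) N.subset by blast
  obtain c where c: "c \<in> carrier G" and C_eq: "C = generate G {c}"
    using C cyclic_subgroup_iff_generate unfolding max_cyclic_subgroup_def by blast
  obtain D where D: "max_cyclic_subgroup G D" and "generate G {c \<otimes> n} \<subseteq> D"
    using ex_max_cyclic_subgroup_containing[OF fin cyclic_subgroup_generate] c n_carrier by blast
  then have cn_D: "c \<otimes> n \<in> D"
    using generate.incl[of "c \<otimes> n" "{c \<otimes> n}" G] by blast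
  have "(C, D) \<notin> subgroup_conj_rel G"
  proof
    assume "(C, D) \<in> subgroup_conj_rel G"
    then have "c \<otimes> n \<in> C"
      using subgroup_conj_rel_normal[OF C_normal] cn_D by blast
    moreover have "c \<in> C"
      unfolding C_eq by (rule generate.incl) simp
    ultimately have "inv c \<otimes> (c \<otimes> n) \<in> C"
      using C_normal normal_imp_subgroup subgroup.m_closed subgroup.m_inv_closed by metis
    then show False
      using n c n_carrier by (simp add: inv_mult_cancel)
  qed
  moreover have "(\<lambda>a. N #> a) ` C \<subseteq> (\<lambda>a. N #> a) ` D"
  proof -
    have "N #> n = \<one>\<^bsub>G Mod N\<^esub>"
      using n n_carrier N.subgroup_axioms by (simp add: coset_join2)
    then have "N #> (c \<otimes> n) = (N #> c) \<otimes>\<^bsub>G Mod N\<^esub> \<one>\<^bsub>G Mod N\<^esub>"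
      using h.hom_mult[OF c n_carrier] by (simp only:)
    also have "\<dots> = N #> c"
      using GN.r_one[OF h.hom_closed[OF c]] .
    finally have "N #> c \<in> (\<lambda>a. N #> a) ` D"
      using cn_D by (metis image_eqI)
    moreover have "subgroup ((\<lambda>a. N #> a) ` D) (G Mod N)"
      using D h.cyclic_subgroup_image unfolding max_cyclic_subgroup_def cyclic_subgroup_def
      by blast
    ultimately have "generate (G Mod N) {N #> c} \<subseteq> (\<lambda>a. N #> a) ` D"
      by (simp add: GN.generate_subgroup_incl)
    then show ?thesis
      unfolding C_eq using h.generate_img[of "{c}"] c by simp
  qed
  moreover have "(\<lambda>a. N #> a) ` carrier G = carrier (G Mod N)"
    by (auto simp: carrier_FactGroup RCOSETS_def)
  ultimately show ?thesis
    using h.eta_less_of_image_subset[OF fin _ C D] by blast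
qed

theorem theorem1p3:
  fixes G :: "('a, 'b) monoid_scheme" and p :: nat
  assumes "group G" and "finite (carrier G)" and "Factorial_Ring.prime p"
    and "\<exists>k. order G = p ^ k"
    and "\<exists>C. max_cyclic_subgroup G C \<and> C \<lhd> G"
  shows "cyclic_subgroup G (X_subgroup G)"
proof -
  interpret group G by fact
  obtain C where C: "max_cyclic_subgroup G C" and C_normal: "C \<lhd> G"
    using assms(5) by blast
  have C_subgroup: "subgroup C G"
    using C_normal by (rule normal_imp_subgroup)
  have "N \<subseteq> C" if "N \<lhd> G" and "eta (G Mod N) = eta G" for N
    using eta_Mod_less[OF assms(2) that(1) C C_normal] that(2) by fastforce
  then have gens: "\<Union> {N. N \<lhd> G \<and> eta (G Mod N) = eta G} \<subseteq> C"
    by blast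
  have "X_subgroup G \<subseteq> C"
    unfolding X_subgroup_def using gens C_subgroup by (rule generate_subgroup_incl)
  moreover have "subgroup (X_subgroup G) G"
    unfolding X_subgroup_def using gens C_subgroup subgroup.subset
    by (blast intro: generate_is_subgroup)
  ultimately show ?thesis
    using subgroup_of_cyclic_subgroup C unfolding max_cyclic_subgroup_def by blast
qed

end
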